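(* Let $k\ge2$ be a constant integer. There are constants $c,c'>0$ such that for all sufficiently large $n$, with probability at least $c'\,n^{1/k-k}$ the random $k$-tree $G(n)$ has an $s$-barrier with $s\ge c\,n^{1-1/k}$.
   Context: Random $k$-tree process: $G(0)$ is a clique on $k$ vertices; for $t\ge1$, $G(t)$ is obtained from $G(t-1)$ by choosing a $k$-clique of $G(t-1)$ uniformly at random, creating a new vertex, and joining it to all vertices of the chosen clique. An $s$-barrier in a connected graph is a pair $\{C_1,C_2\}$ of vertex-disjoint $k$-cliques such that (i) deleting all edges between $C_1$ and $C_2$ disconnects the graph, and (ii) every vertex of $V(C_1)\cup V(C_2)$ has degree at least $s$. *)

theory Defs
  imports "HOL-Probability.Probability"
begin

text \<open>Graphs on vertex set V :: nat set, with edge set E a set of 2-element vertex sets.\<close>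

definition is_clique :: "nat \<Rightarrow> nat set \<Rightarrow> nat set set \<Rightarrow> nat set \<Rightarrow> bool" where
  "is_clique k V E C \<longleftrightarrow> C \<subseteq> V \<and> finite C \<and> card C = k \<and>
     (\<forall>u\<in>C. \<forall>v\<in>C. u \<noteq> v \<longrightarrow> {u, v} \<in> E)"

definition kcliques :: "nat \<Rightarrow> nat set \<Rightarrow> nat set set \<Rightarrow> nat set set" where
  "kcliques k V E = {C. is_clique k V E C}"

definition complete_edges :: "nat set \<Rightarrow> nat set set" where
  "complete_edges C = {{u, v} | u v. u \<in> C \<and> v \<in> C \<and> u \<noteq> v}"

text \<open>Random k-tree process: G(t) has vertex set {..<k+t}; the vertex added at step t+1 is k+t.
  The distribution of the edge set of G(t).\<close>
fun ktree :: "nat \<Rightarrow> nat \<Rightarrow> nat set set pmf" where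
  "ktree k 0 = return_pmf (complete_edges {..<k})"
| "ktree k (Suc t) = bind_pmf (ktree k t) (\<lambda>E.
     map_pmf (\<lambda>C. E \<union> {{k + t, u} | u. u \<in> C})
             (pmf_of_set (kcliques k {..<k + t} E)))"

definition ktree_vertices :: "nat \<Rightarrow> nat \<Rightarrow> nat set" where
  "ktree_vertices k t = {..<k + t}"

definition graph_connected :: "nat set \<Rightarrow> nat set set \<Rightarrow> bool" where
  "graph_connected V E \<longleftrightarrow>
     (\<forall>u\<in>V. \<forall>v\<in>V. (\<lambda>x y. x \<in> V \<and> y \<in> V \<and> {x, y} \<in> E)\<^sup>*\<^sup>* u v)"

definition degree :: "nat set \<Rightarrow> nat set set \<Rightarrow> nat \<Rightarrow> nat" where
  "degree V E u = card {v \<in> V. v \<noteq> u \<and> {u, v} \<in> E}"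

definition is_barrier :: "nat \<Rightarrow> nat \<Rightarrow> nat set \<Rightarrow> nat set set \<Rightarrow> nat set \<Rightarrow> nat set \<Rightarrow> bool" where
  "is_barrier k s V E C1 C2 \<longleftrightarrow>
     is_clique k V E C1 \<and> is_clique k V E C2 \<and> C1 \<inter> C2 = {} \<and>
     \<not> graph_connected V (E - {{u, v} | u v. u \<in> C1 \<and> v \<in> C2}) \<and>
     (\<forall>u \<in> C1 \<union> C2. degree V E u \<ge> s)"

definition has_barrier :: "nat \<Rightarrow> nat \<Rightarrow> nat set \<Rightarrow> nat set set \<Rightarrow> bool" where
  "has_barrier k s V E \<longleftrightarrow> (\<exists>C1 C2. is_barrier k s V E C1 C2)"

end

theory Submission
  imports Defs
begin

text \<open>
  During the first k + 2 steps the process can follow a fixed seed: the new vertices run along a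
  path of k-cliques, so that G(k) consists of the disjoint k-cliques L = {0..<k} and
  R = {k..<2k} together with k^2 - 1 mixed cliques meeting both, and the next two vertices are
  attached to L and to R. As long as no mixed clique is chosen afterwards, every edge outside the
  seed and every unmixed clique lies on one side of a partition separating L from R, so deleting
  the L-R edges disconnects the graph. Since G(t) has 1 + kt cliques, this event has probability at
  least of order n^(1/k - k).

  On this event let c_v be the number of unmixed cliques containing a vertex v of L or R. Choosing
  such a clique raises c_v by k - 1 and the degree of v by one, and the expectation of the
  potential (k - 1)/(c_v - (k - 1)) decays by an extra factor of order n^(1/k - 1). A Markov-type
  bound therefore shows that with half the probability of the event every c_v exceeds (k - 1)s,
  hence every degree is at least s, for some s of order n^(1 - 1/k).
\<close>

section \<open>The growth step\<close>

definition add_vertex :: "nat \<Rightarrow> nat \<Rightarrow> nat set set \<Rightarrow> nat set \<Rightarrow> nat set set" where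
  "add_vertex k t E C = E \<union> {{k + t, u} | u. u \<in> C}"

abbreviation cliques :: "nat \<Rightarrow> nat \<Rightarrow> nat set set \<Rightarrow> nat set set" where
  "cliques k t E \<equiv> kcliques k {..<k + t} E"

definition new_cliques :: "nat \<Rightarrow> nat \<Rightarrow> nat set \<Rightarrow> nat set set" where
  "new_cliques k t C = (\<lambda>u. insert (k + t) (C - {u})) ` C"

lemma ktree_Suc_add_vertex:
  "ktree k (Suc t) = bind_pmf (ktree k t) (\<lambda>E. map_pmf (add_vertex k t E) (pmf_of_set (cliques k t E)))"
  by (simp add: add_vertex_def[abs_def])

lemma is_clique_mono: "is_clique k V E C \<Longrightarrow> V \<subseteq> V' \<Longrightarrow> E \<subseteq> E' \<Longrightarrow> is_clique k V' E' C"
  unfolding is_clique_def by auto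

lemma kcliques_mono: "V \<subseteq> V' \<Longrightarrow> E \<subseteq> E' \<Longrightarrow> kcliques k V E \<subseteq> kcliques k V' E'"
  unfolding kcliques_def by (auto intro: is_clique_mono)

lemma finite_kcliques: "finite V \<Longrightarrow> finite (kcliques k V E)"
  by (rule finite_subset[of _ "Pow V"]) (auto simp: kcliques_def is_clique_def)

lemma kcliquesD: "C \<in> kcliques k V E \<Longrightarrow> C \<subseteq> V \<and> finite C \<and> card C = k"
  by (simp add: kcliques_def is_clique_def)

lemma kcliques_complete_edges:
  assumes "finite V"
  shows "kcliques (card V) V (complete_edges V) = {V}"
proof -
  have "C = V" if "C \<in> kcliques (card V) V (complete_edges V)" for C
    using kcliquesD[OF that] assms by (intro card_subset_eq) auto
  moreover have "V \<in> kcliques (card V) V (complete_edges V)"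
    using assms by (auto simp: kcliques_def is_clique_def complete_edges_def)
  ultimately show ?thesis by blast
qed

lemma cliques_mono: "E \<subseteq> E' \<Longrightarrow> t \<le> t' \<Longrightarrow> cliques k t E \<subseteq> cliques k t' E'"
  by (rule kcliques_mono) auto

lemma subset_add_vertex: "E \<subseteq> add_vertex k t E C"
  by (simp add: add_vertex_def)

lemma Union_add_vertex:
  assumes "\<Union>E \<subseteq> {..<k + t}" "C \<in> cliques k t E"
  shows "\<Union>(add_vertex k t E C) \<subseteq> {..<k + Suc t}"
  using assms kcliquesD[OF assms(2)] by (auto simp: add_vertex_def)

lemma neighbour_add_vertex:
  assumes "\<Union>E \<subseteq> {..<k + t}" "{k + t, x} \<in> add_vertex k t E C" "x \<noteq> k + t"
  shows "x \<in> C"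
proof -
  have "{k + t, x} \<notin> E" using assms(1) by auto
  then obtain u where "u \<in> C" "{k + t, x} = {k + t, u}" using assms(2) by (auto simp: add_vertex_def)
  thus ?thesis using assms(3) by (metis doubleton_eq_iff)
qed

lemma card_Diff_singleton_subset:
  assumes "finite C" "A \<subseteq> C" "Suc (card A) = card C"
  obtains u where "u \<in> C" "A = C - {u}"
proof -
  have "A \<noteq> C" using assms(3) by auto
  then obtain u where u: "u \<in> C" "u \<notin> A" using assms(2) by blast
  have "A = C - {u}"
    using u assms by (intro card_subset_eq) (auto simp: card_Diff_singleton)
  thus thesis using u that by blast
qed

lemma new_clique_cases:
  assumes E: "\<Union>E \<subseteq> {..<k + t}" and C: "C \<in> cliques k t E"
    and D: "D \<in> cliques k (Suc t) (add_vertex k t E C)"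
  shows "D \<in> cliques k t E \<or> D \<in> new_cliques k t C"
proof (cases "k + t \<in> D")
  case False
  have "D \<subseteq> {..<k + t}"
    using False kcliquesD[OF D] by (auto simp: less_Suc_eq)
  moreover have "{u, v} \<in> E" if "u \<in> D" "v \<in> D" "u \<noteq> v" for u v
    using that D False by (auto simp: kcliques_def is_clique_def add_vertex_def doubleton_eq_iff)
  ultimately show ?thesis using D by (auto simp: kcliques_def is_clique_def)
next
  case True
  have sub: "D - {k + t} \<subseteq> C"
  proof
    fix x assume x: "x \<in> D - {k + t}"
    hence "{k + t, x} \<in> add_vertex k t E C"
      using D True by (auto simp: kcliques_def is_clique_def)
    thus "x \<in> C" using neighbour_add_vertex[OF E] x by blast
  qed
  have "card D > 0" using True kcliquesD[OF D] card_gt_0_iff by blast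
  hence "Suc (card (D - {k + t})) = card C"
    using kcliquesD[OF C] kcliquesD[OF D] True by (simp add: card.remove)
  then obtain u where "u \<in> C" "D - {k + t} = C - {u}"
    using kcliquesD[OF C] sub card_Diff_singleton_subset by metis
  hence "D = insert (k + t) (C - {u})" using True by blast
  thus ?thesis using \<open>u \<in> C\<close> by (auto simp: new_cliques_def)
qed

lemma new_cliques_subset:
  assumes C: "C \<in> cliques k t E"
  shows "new_cliques k t C \<subseteq> cliques k (Suc t) (add_vertex k t E C)"
proof
  fix D assume "D \<in> new_cliques k t C"
  then obtain u where u: "u \<in> C" "D = insert (k + t) (C - {u})" by (auto simp: new_cliques_def)
  have C': "C \<subseteq> {..<k + t}" "finite C" "card C = k" "\<forall>x\<in>C. \<forall>y\<in>C. x \<noteq> y \<longrightarrow> {x, y} \<in> E"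
    using C by (auto simp: kcliques_def is_clique_def)
  have "card C > 0" "k + t \<notin> C - {u}" using u C' card_gt_0_iff by auto
  hence "card D = k"
    using u C' by (simp add: card_Diff_singleton)
  moreover have "{x, y} \<in> add_vertex k t E C" if "x \<in> D" "y \<in> D" "x \<noteq> y" for x y
    using that u C' by (auto simp: add_vertex_def insert_commute)
  ultimately show "D \<in> cliques k (Suc t) (add_vertex k t E C)"
    using u C' by (auto simp: kcliques_def is_clique_def)
qed

lemma cliques_add_vertex:
  assumes "\<Union>E \<subseteq> {..<k + t}" "C \<in> cliques k t E"
  shows "cliques k (Suc t) (add_vertex k t E C) = cliques k t E \<union> new_cliques k t C"
proof -
  have "cliques k t E \<subseteq> cliques k (Suc t) (add_vertex k t E C)"
    by (rule cliques_mono[OF subset_add_vertex]) simp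
  thus ?thesis using new_clique_cases[OF assms] new_cliques_subset[OF assms(2)] by blast
qed

lemma cliques_disjoint_new_cliques: "cliques k t E \<inter> new_cliques k t C = {}"
proof -
  have "D \<notin> new_cliques k t C" if "D \<in> cliques k t E" for D
    using kcliquesD[OF that] by (fastforce simp: new_cliques_def)
  thus ?thesis by blast
qed

lemma inj_on_new_cliques:
  assumes "k + t \<notin> C"
  shows "inj_on (\<lambda>u. insert (k + t) (C - {u})) C"
proof (rule inj_onI)
  fix u v assume "u \<in> C" "insert (k + t) (C - {u}) = insert (k + t) (C - {v})"
  hence "C - {u} = C - {v}" using assms insert_ident[of "k + t" "C - {u}" "C - {v}"] by blast
  thus "u = v" using \<open>u \<in> C\<close> by blast
qed

lemma card_new_cliques_containing:
  assumes C: "C \<in> cliques k t E" and v: "v \<noteq> k + t"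
  shows "card {D \<in> new_cliques k t C. v \<in> D} = (if v \<in> C then k - 1 else 0)"
proof (cases "v \<in> C")
  case True
  have "{D \<in> new_cliques k t C. v \<in> D} = (\<lambda>u. insert (k + t) (C - {u})) ` (C - {v})"
    using v True by (auto simp: new_cliques_def)
  moreover have "inj_on (\<lambda>u. insert (k + t) (C - {u})) (C - {v})"
    using kcliquesD[OF C] by (intro inj_on_subset[OF inj_on_new_cliques]) auto
  ultimately show ?thesis
    using True kcliquesD[OF C] by (simp add: card_image)
next
  case False
  have "{D \<in> new_cliques k t C. v \<in> D} = {}" using False v by (auto simp: new_cliques_def)
  thus ?thesis unfolding if_not_P[OF False] by (simp only: card.empty)
qed

lemma card_cliques_add_vertex:
  assumes "\<Union>E \<subseteq> {..<k + t}" "C \<in> cliques k t E"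
  shows "card (cliques k (Suc t) (add_vertex k t E C)) = card (cliques k t E) + k"
proof -
  have "k + t \<notin> C" using kcliquesD[OF assms(2)] by auto
  hence "card (new_cliques k t C) = k"
    using kcliquesD[OF assms(2)] inj_on_new_cliques[of k t C] by (simp add: new_cliques_def card_image)
  moreover have "finite (new_cliques k t C)"
    using kcliquesD[OF assms(2)] by (simp add: new_cliques_def)
  ultimately show ?thesis
    using cliques_add_vertex[OF assms] cliques_disjoint_new_cliques
    by (simp add: card_Un_disjoint finite_kcliques)
qed

lemma degree_add_vertex:
  assumes E: "\<Union>E \<subseteq> {..<k + t}" and C: "C \<in> cliques k t E" and v: "v < k + t"
  shows "degree {..<k + Suc t} (add_vertex k t E C) v = degree {..<k + t} E v + of_bool (v \<in> C)"
proof -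
  have "{y \<in> {..<k + Suc t}. y \<noteq> v \<and> {v, y} \<in> add_vertex k t E C} =
      {y \<in> {..<k + t}. y \<noteq> v \<and> {v, y} \<in> E} \<union> (if v \<in> C then {k + t} else {})"
    using E v kcliquesD[OF C]
    by (auto simp: add_vertex_def doubleton_eq_iff insert_commute less_Suc_eq)
  thus ?thesis by (simp add: degree_def)
qed

lemma ktree_support:
  assumes "k \<ge> 1" "E \<in> set_pmf (ktree k t)"
  shows "\<Union>E \<subseteq> {..<k + t} \<and> card (cliques k t E) = 1 + k * t"
  using assms(2)
proof (induction t arbitrary: E)
  case 0
  hence "E = complete_edges {..<k}" by simp
  thus ?case using kcliques_complete_edges[of "{..<k}"] by (auto simp: complete_edges_def)
next
  case (Suc t)
  have "cliques k t E' \<noteq> {}" if "E' \<in> set_pmf (ktree k t)" for E'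
    using Suc.IH[OF that] by auto
  with Suc.prems obtain E' C where E': "E' \<in> set_pmf (ktree k t)"
    and C: "C \<in> cliques k t E'" and E: "E = add_vertex k t E' C"
    unfolding ktree_Suc_add_vertex by (auto simp: finite_kcliques)
  have "\<Union>E' \<subseteq> {..<k + t}" "card (cliques k t E') = 1 + k * t"
    using Suc.IH[OF E'] by auto
  thus ?case
    using E Union_add_vertex[OF _ C] card_cliques_add_vertex[OF _ C] by simp
qed

lemma cliques_nonempty: "k \<ge> 1 \<Longrightarrow> E \<in> set_pmf (ktree k t) \<Longrightarrow> cliques k t E \<noteq> {}"
  using ktree_support[of k E t] by auto

lemma set_pmf_ktree_Suc:
  "k \<ge> 1 \<Longrightarrow> set_pmf (ktree k (Suc t)) = (\<Union>E\<in>set_pmf (ktree k t). add_vertex k t E ` cliques k t E)"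
  unfolding ktree_Suc_add_vertex by (auto simp: cliques_nonempty finite_kcliques)

lemma finite_set_pmf_ktree:
  assumes "k \<ge> 1"
  shows "finite (set_pmf (ktree k t))"
proof (induction t)
  case (Suc t)
  thus ?case unfolding set_pmf_ktree_Suc[OF assms] by (simp add: finite_kcliques)
qed simp

section \<open>The seed\<close>

definition left_clique :: "nat \<Rightarrow> nat set" where
  "left_clique k = {..<k}"

definition right_clique :: "nat \<Rightarrow> nat set" where
  "right_clique k = {k..<2 * k}"

definition path_clique :: "nat \<Rightarrow> nat \<Rightarrow> nat set" where
  "path_clique k i = {i..<k + i}"

definition seed_choice :: "nat \<Rightarrow> nat \<Rightarrow> nat set" where
  "seed_choice k i =
     (if i < k then path_clique k i else if i = k then left_clique k else right_clique k)"

fun seed :: "nat \<Rightarrow> nat \<Rightarrow> nat set set" where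
  "seed k 0 = complete_edges {..<k}"
| "seed k (Suc i) = add_vertex k i (seed k i) (seed_choice k i)"

definition mixed_cliques :: "nat \<Rightarrow> nat set set" where
  "mixed_cliques k = cliques k k (seed k k) - {left_clique k, right_clique k}"

lemma left_Un_right_clique: "left_clique k \<union> right_clique k = {..<2 * k}"
  by (auto simp: left_clique_def right_clique_def)

lemma left_Int_right_clique: "left_clique k \<inter> right_clique k = {}"
  by (auto simp: left_clique_def right_clique_def)

lemma left_neq_right_clique: "k \<ge> 1 \<Longrightarrow> left_clique k \<noteq> right_clique k"
  using left_Int_right_clique[of k] by (auto simp: left_clique_def lessThan_empty_iff)

lemma cliques_0: "k \<ge> 1 \<Longrightarrow> cliques k 0 (complete_edges {..<k}) = {left_clique k}"
  using kcliques_complete_edges[of "{..<k}"] by (simp add: left_clique_def)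

lemma seed_mono: "i \<le> j \<Longrightarrow> seed k i \<subseteq> seed k j"
proof (induction j)
  case (Suc j)
  thus ?case using subset_add_vertex[of "seed k j" k j "seed_choice k j"] by (auto simp: le_Suc_eq)
qed simp

lemma seed_Suc_in_support:
  assumes "k \<ge> 1" "seed k i \<in> set_pmf (ktree k i)" "seed_choice k i \<in> cliques k i (seed k i)"
  shows "seed k (Suc i) \<in> set_pmf (ktree k (Suc i))"
  unfolding set_pmf_ktree_Suc[OF assms(1)] using assms(2,3) by auto

lemma path_clique_in_cliques:
  assumes k: "k \<ge> 1" and i: "i \<le> k"
  shows "seed k i \<in> set_pmf (ktree k i) \<and> path_clique k i \<in> cliques k i (seed k i)"
  using i
proof (induction i)
  case 0
  have "path_clique k 0 = left_clique k" by (auto simp: path_clique_def left_clique_def)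
  thus ?case using cliques_0[OF k] by simp
next
  case (Suc i)
  hence IH: "seed k i \<in> set_pmf (ktree k i)" "path_clique k i \<in> cliques k i (seed k i)"
    and choice: "seed_choice k i = path_clique k i" by (auto simp: seed_choice_def)
  have "\<Union>(seed k i) \<subseteq> {..<k + i}" using ktree_support[OF k IH(1)] by simp
  moreover have "path_clique k (Suc i) \<in> new_cliques k i (path_clique k i)"
    using k unfolding new_cliques_def path_clique_def
    by (intro image_eqI[of _ _ i]) auto
  ultimately show ?case
    using IH choice seed_Suc_in_support[OF k IH(1)] cliques_add_vertex by auto
qed

lemma left_clique_in_cliques: "k \<ge> 1 \<Longrightarrow> k \<le> t \<Longrightarrow> left_clique k \<in> cliques k t (seed k t)"
  using cliques_0[of k] cliques_mono[OF seed_mono[of 0 t k], of 0 t] by auto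

lemma right_clique_in_cliques:
  assumes "k \<ge> 1" "k \<le> t"
  shows "right_clique k \<in> cliques k t (seed k t)"
proof -
  have "right_clique k = path_clique k k" by (auto simp: right_clique_def path_clique_def)
  thus ?thesis
    using path_clique_in_cliques[OF assms(1) order_refl] cliques_mono[OF seed_mono[OF assms(2)] assms(2)]
    by auto
qed

lemma seed_in_support: "k \<ge> 1 \<Longrightarrow> i \<le> k + 2 \<Longrightarrow> seed k i \<in> set_pmf (ktree k i)"
proof (induction i)
  case (Suc i)
  have "seed_choice k i \<in> cliques k i (seed k i)"
    using Suc path_clique_in_cliques[of k i] left_clique_in_cliques[of k i] right_clique_in_cliques[of k i]
    by (auto simp: seed_choice_def)
  thus ?case using Suc seed_Suc_in_support by simp
qed simp

lemma Union_seed: "k \<ge> 1 \<Longrightarrow> i \<le> k + 2 \<Longrightarrow> \<Union>(seed k i) \<subseteq> {..<k + i}"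
  using ktree_support[OF _ seed_in_support] by blast

lemma cliques_seed_minus_mixed:
  "k \<ge> 1 \<Longrightarrow> cliques k k (seed k k) - mixed_cliques k = {left_clique k, right_clique k}"
  unfolding mixed_cliques_def using left_clique_in_cliques right_clique_in_cliques by blast

lemma mixed_cliques_subset: "mixed_cliques k \<subseteq> cliques k k (seed k k)"
  by (simp add: mixed_cliques_def)

lemma card_mixed_cliques: "k \<ge> 1 \<Longrightarrow> card (mixed_cliques k) = k * k - 1"
  using ktree_support[OF _ seed_in_support[of k k]] left_neq_right_clique[of k]
    left_clique_in_cliques[of k k] right_clique_in_cliques[of k k]
  by (simp add: mixed_cliques_def card_Diff_subset finite_kcliques)

lemma mixed_clique_meets_both:
  assumes "D \<in> mixed_cliques k"
  shows "D \<inter> left_clique k \<noteq> {} \<and> D \<inter> right_clique k \<noteq> {}"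
proof -
  have D: "D \<in> cliques k k (seed k k)" "D \<noteq> left_clique k" "D \<noteq> right_clique k"
    using assms by (auto simp: mixed_cliques_def)
  have DS: "D \<subseteq> left_clique k \<union> right_clique k" "card D = k"
    using kcliquesD[OF D(1)] by (simp_all add: left_Un_right_clique mult_2)
  have "D = left_clique k" if "D \<inter> right_clique k = {}"
    using that DS by (intro card_subset_eq) (auto simp: left_clique_def)
  moreover have "D = right_clique k" if "D \<inter> left_clique k = {}"
    using that DS by (intro card_subset_eq) (auto simp: right_clique_def)
  ultimately show ?thesis using D(2,3) by blast
qed

section \<open>Separation by the seed cliques\<close>

definition clique_count :: "nat \<Rightarrow> nat \<Rightarrow> nat set set \<Rightarrow> nat \<Rightarrow> nat" where
  "clique_count k t E v = card {C \<in> cliques k t E - mixed_cliques k. v \<in> C}"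

definition side_sets :: "nat \<Rightarrow> nat \<Rightarrow> nat set set \<Rightarrow> nat set set" where
  "side_sets k t E = (E - seed k k) \<union> (cliques k t E - mixed_cliques k)"

definition compatible_partition :: "'a set \<Rightarrow> 'a set set \<Rightarrow> 'a set \<Rightarrow> 'a set \<Rightarrow> bool" where
  "compatible_partition V S A B \<longleftrightarrow> A \<union> B = V \<and> A \<inter> B = {} \<and> (\<forall>X\<in>S. X \<subseteq> A \<or> X \<subseteq> B)"

lemma compatible_partition_commute:
  "compatible_partition V S A B \<longleftrightarrow> compatible_partition V S B A"
  by (auto simp: compatible_partition_def)

lemma compatible_partition_mono:
  "compatible_partition V S A B \<Longrightarrow> S' \<subseteq> S \<Longrightarrow> compatible_partition V S' A B"
  by (auto simp: compatible_partition_def)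

lemma compatible_partition_insert:
  assumes "compatible_partition V S A B" "w \<notin> V" "\<forall>X\<in>S'. X \<subseteq> insert w A"
  shows "compatible_partition (insert w V) (S \<union> S') (insert w A) B"
  using assms by (auto simp: compatible_partition_def)

lemma compatible_partition_restrict:
  assumes "compatible_partition V' S A B" "V \<subseteq> V'" "\<forall>X\<in>S. X \<subseteq> V"
  shows "compatible_partition V S (A \<inter> V) (B \<inter> V)"
  using assms by (auto simp: compatible_partition_def)

definition separating_partition :: "nat \<Rightarrow> nat \<Rightarrow> nat set set \<Rightarrow> nat set \<Rightarrow> nat set \<Rightarrow> bool" where
  "separating_partition k t E A B \<longleftrightarrow> left_clique k \<subseteq> A \<and> right_clique k \<subseteq> B \<and>
     compatible_partition {..<k + t} (side_sets k t E) A B"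

text \<open>The count bound is preserved because choosing a clique containing v adds k - 1 unmixed
  cliques at v and one neighbour of v; it turns many cliques at v into a high degree of v.\<close>

definition separated :: "nat \<Rightarrow> nat \<Rightarrow> nat set set \<Rightarrow> bool" where
  "separated k t E \<longleftrightarrow> seed k k \<subseteq> E \<and> (\<exists>A B. separating_partition k t E A B) \<and>
     (\<forall>v<2 * k. clique_count k t E v \<le> (k - 1) * degree {..<k + t} E v + 1)"

lemma mixed_cliques_subset_lessThan: "D \<in> mixed_cliques k \<Longrightarrow> D \<subseteq> {..<2 * k}"
  using kcliquesD mixed_cliques_subset by (fastforce simp: mult_2)

lemma new_cliques_disjoint_mixed: "k \<le> t \<Longrightarrow> new_cliques k t C \<inter> mixed_cliques k = {}"
  using mixed_cliques_subset_lessThan by (fastforce simp: new_cliques_def)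

lemma clique_count_add_vertex:
  assumes E: "\<Union>E \<subseteq> {..<k + t}" and C: "C \<in> cliques k t E" and "k \<le> t" "v < 2 * k"
  shows "clique_count k (Suc t) (add_vertex k t E C) v = clique_count k t E v + (k - 1) * of_bool (v \<in> C)"
proof -
  let ?old = "{D \<in> cliques k t E - mixed_cliques k. v \<in> D}"
  let ?new = "{D \<in> new_cliques k t C. v \<in> D}"
  have "{D \<in> cliques k (Suc t) (add_vertex k t E C) - mixed_cliques k. v \<in> D} = ?old \<union> ?new"
    using cliques_add_vertex[OF E C] new_cliques_disjoint_mixed[OF \<open>k \<le> t\<close>] by blast
  moreover have "card (?old \<union> ?new) = card ?old + card ?new"
    using kcliquesD[OF C] cliques_disjoint_new_cliques[of k t E C]
    by (intro card_Un_disjoint) (auto simp: finite_kcliques new_cliques_def)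
  moreover have "v \<noteq> k + t" using assms by simp
  ultimately show ?thesis
    using card_new_cliques_containing[OF C] by (simp add: clique_count_def)
qed

lemma count_bound_add_vertex:
  assumes "\<Union>E \<subseteq> {..<k + t}" "C \<in> cliques k t E" "k \<le> t" "v < 2 * k"
  shows "clique_count k (Suc t) (add_vertex k t E C) v \<le>
           (k - 1) * degree {..<k + Suc t} (add_vertex k t E C) v + 1
     \<longleftrightarrow> clique_count k t E v \<le> (k - 1) * degree {..<k + t} E v + 1"
proof -
  have v: "v < k + t" using assms(3,4) by simp
  show ?thesis
    unfolding clique_count_add_vertex[OF assms] degree_add_vertex[OF assms(1,2) v]
    by (simp add: distrib_left)
qed

lemma side_sets_add_vertex:
  assumes "\<Union>E \<subseteq> {..<k + t}" "C \<in> cliques k t E"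
  shows "side_sets k (Suc t) (add_vertex k t E C) \<subseteq>
           side_sets k t E \<union> ({{k + t, u} | u. u \<in> C} \<union> new_cliques k t C)"
  using cliques_add_vertex[OF assms] by (auto simp: side_sets_def add_vertex_def)

lemma side_sets_subset_add_vertex:
  "side_sets k t E \<subseteq> side_sets k (Suc t) (add_vertex k t E C)"
  using cliques_mono[OF subset_add_vertex, of t "Suc t" k E k t C]
  by (auto simp: side_sets_def add_vertex_def)

lemma clique_count_seed:
  assumes "k \<ge> 1" "v < 2 * k"
  shows "clique_count k k (seed k k) v = 1"
proof -
  have "{C \<in> cliques k k (seed k k) - mixed_cliques k. v \<in> C} =
      (if v \<in> left_clique k then {left_clique k} else {right_clique k})"
    using assms left_Un_right_clique[of k] left_Int_right_clique[of k]
    unfolding cliques_seed_minus_mixed[OF assms(1)] by auto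
  thus ?thesis by (simp add: clique_count_def)
qed

lemma separated_seed:
  assumes "k \<ge> 1"
  shows "separated k k (seed k k)"
proof -
  have "side_sets k k (seed k k) = {left_clique k, right_clique k}"
    using cliques_seed_minus_mixed[OF assms] by (simp add: side_sets_def)
  hence "separating_partition k k (seed k k) (left_clique k) (right_clique k)"
    using left_Un_right_clique[of k] left_Int_right_clique[of k]
    by (simp add: separating_partition_def compatible_partition_def mult_2)
  thus ?thesis using clique_count_seed[OF assms] by (auto simp: separated_def)
qed

lemma seed_edge_lessThan: "k \<ge> 1 \<Longrightarrow> e \<in> seed k k \<Longrightarrow> e \<subseteq> {..<2 * k}"
  using Union_seed[of k k] by (auto simp: mult_2)

lemma compatible_partition_add_vertex:
  assumes E: "\<Union>E \<subseteq> {..<k + t}" and C: "C \<in> cliques k t E"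
    and cp: "compatible_partition {..<k + t} (side_sets k t E) A B" and "C \<subseteq> A"
  shows "compatible_partition {..<k + Suc t} (side_sets k (Suc t) (add_vertex k t E C)) (insert (k + t) A) B"
proof -
  let ?S' = "{{k + t, u} | u. u \<in> C} \<union> new_cliques k t C"
  have "\<forall>X\<in>?S'. X \<subseteq> insert (k + t) A"
    using \<open>C \<subseteq> A\<close> by (auto simp: new_cliques_def)
  hence "compatible_partition (insert (k + t) {..<k + t}) (side_sets k t E \<union> ?S') (insert (k + t) A) B"
    by (intro compatible_partition_insert[OF cp]) auto
  thus ?thesis
    using side_sets_add_vertex[OF E C] by (simp add: lessThan_Suc compatible_partition_mono)
qed

lemma separating_partition_add_vertex:
  assumes E: "\<Union>E \<subseteq> {..<k + t}" and C: "C \<in> cliques k t E - mixed_cliques k"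
    and sp: "separating_partition k t E A B"
  shows "separating_partition k (Suc t) (add_vertex k t E C) (insert (k + t) A) B \<or>
    separating_partition k (Suc t) (add_vertex k t E C) A (insert (k + t) B)"
proof -
  have C': "C \<in> cliques k t E" using C by simp
  have cp: "compatible_partition {..<k + t} (side_sets k t E) A B"
    using sp by (simp add: separating_partition_def)
  have "C \<in> side_sets k t E" using C by (simp add: side_sets_def)
  hence "C \<subseteq> A \<or> C \<subseteq> B" using cp by (auto simp: compatible_partition_def)
  thus ?thesis
  proof
    assume "C \<subseteq> A"
    hence "compatible_partition {..<k + Suc t} (side_sets k (Suc t) (add_vertex k t E C)) (insert (k + t) A) B"
      by (rule compatible_partition_add_vertex[OF E C' cp])
    thus ?thesis using sp by (auto simp: separating_partition_def)
  next
    assume "C \<subseteq> B"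
    hence "compatible_partition {..<k + Suc t} (side_sets k (Suc t) (add_vertex k t E C)) (insert (k + t) B) A"
      by (rule compatible_partition_add_vertex[OF E C' compatible_partition_commute[THEN iffD1, OF cp]])
    hence "compatible_partition {..<k + Suc t} (side_sets k (Suc t) (add_vertex k t E C)) A (insert (k + t) B)"
      by (rule compatible_partition_commute[THEN iffD1])
    thus ?thesis using sp by (auto simp: separating_partition_def)
  qed
qed

lemma separated_add_vertex:
  assumes "k \<le> t" and E: "\<Union>E \<subseteq> {..<k + t}" and sep: "separated k t E"
    and C: "C \<in> cliques k t E - mixed_cliques k"
  shows "separated k (Suc t) (add_vertex k t E C)"
proof -
  obtain A B where "separating_partition k t E A B"
    using sep by (auto simp: separated_def)
  hence "\<exists>A B. separating_partition k (Suc t) (add_vertex k t E C) A B"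
    using separating_partition_add_vertex[OF E C] by blast
  moreover have "seed k k \<subseteq> add_vertex k t E C"
    using sep subset_add_vertex by (fastforce simp: separated_def)
  moreover have "\<forall>v<2 * k. clique_count k (Suc t) (add_vertex k t E C) v \<le>
      (k - 1) * degree {..<k + Suc t} (add_vertex k t E C) v + 1"
    using sep count_bound_add_vertex[OF E _ \<open>k \<le> t\<close>] C by (simp add: separated_def)
  ultimately show ?thesis unfolding separated_def by (intro conjI)
qed

lemma separating_partition_restrict:
  assumes "k \<le> t" and E: "\<Union>E \<subseteq> {..<k + t}"
    and sp: "separating_partition k (Suc t) (add_vertex k t E C) A B"
  shows "separating_partition k t E (A \<inter> {..<k + t}) (B \<inter> {..<k + t})"
proof -
  have "compatible_partition {..<k + Suc t} (side_sets k (Suc t) (add_vertex k t E C)) A B"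
    using sp by (simp only: separating_partition_def)
  hence cp: "compatible_partition {..<k + Suc t} (side_sets k t E) A B"
    by (rule compatible_partition_mono[OF _ side_sets_subset_add_vertex])
  have "\<forall>X\<in>side_sets k t E. X \<subseteq> {..<k + t}"
    using E by (auto simp: side_sets_def dest: kcliquesD)
  hence "compatible_partition {..<k + t} (side_sets k t E) (A \<inter> {..<k + t}) (B \<inter> {..<k + t})"
    using compatible_partition_restrict[OF cp] by simp
  thus ?thesis
    using sp \<open>k \<le> t\<close> by (auto simp: separating_partition_def left_clique_def right_clique_def)
qed

lemma separated_add_vertex_rev:
  assumes "k \<ge> 1" "k \<le> t" and E: "\<Union>E \<subseteq> {..<k + t}" and C: "C \<in> cliques k t E"
    and sep: "separated k (Suc t) (add_vertex k t E C)"
  shows "separated k t E"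
proof -
  obtain A B where "separating_partition k (Suc t) (add_vertex k t E C) A B"
    using sep by (auto simp: separated_def)
  hence "\<exists>A B. separating_partition k t E A B"
    using separating_partition_restrict[OF \<open>k \<le> t\<close> E] by blast
  moreover have "seed k k \<subseteq> E"
  proof
    fix e assume e: "e \<in> seed k k"
    hence "k + t \<notin> e" using seed_edge_lessThan[OF assms(1)] \<open>k \<le> t\<close> by fastforce
    thus "e \<in> E" using e sep by (auto simp: separated_def add_vertex_def)
  qed
  moreover have "\<forall>v<2 * k. clique_count k t E v \<le> (k - 1) * degree {..<k + t} E v + 1"
    using sep count_bound_add_vertex[OF E C \<open>k \<le> t\<close>] by (simp add: separated_def)
  ultimately show ?thesis unfolding separated_def by (intro conjI)
qed

lemma not_separated_add_mixed:
  assumes "k \<ge> 1" "k \<le> t" "C \<in> mixed_cliques k"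
  shows "\<not> separated k (Suc t) (add_vertex k t E C)"
proof
  assume "separated k (Suc t) (add_vertex k t E C)"
  then obtain A B where AB: "left_clique k \<subseteq> A" "right_clique k \<subseteq> B"
    and cp: "compatible_partition {..<k + Suc t} (side_sets k (Suc t) (add_vertex k t E C)) A B"
    by (auto simp: separated_def separating_partition_def)
  have side: "{k + t, u} \<in> side_sets k (Suc t) (add_vertex k t E C)" if "u \<in> C" for u
  proof -
    have "{k + t, u} \<notin> seed k k" using seed_edge_lessThan[OF assms(1)] assms(2) by fastforce
    thus ?thesis using that by (auto simp: side_sets_def add_vertex_def)
  qed
  obtain a b where "a \<in> C \<inter> left_clique k" "b \<in> C \<inter> right_clique k"
    using mixed_clique_meets_both[OF assms(3)] by blast
  with AB side cp have "k + t \<in> A" "k + t \<in> B"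
    unfolding compatible_partition_def by (metis IntD1 IntD2 disjoint_iff insert_subset subsetD)+
  thus False using cp by (auto simp: compatible_partition_def)
qed

definition good :: "nat \<Rightarrow> nat \<Rightarrow> nat set set \<Rightarrow> bool" where
  "good k t E \<longleftrightarrow> separated k t E \<and> seed k (k + 2) \<subseteq> E"

lemma good_add_vertex:
  assumes "k \<le> t" "\<Union>E \<subseteq> {..<k + t}" "good k t E" "C \<in> cliques k t E - mixed_cliques k"
  shows "good k (Suc t) (add_vertex k t E C)"
proof -
  have "separated k (Suc t) (add_vertex k t E C)"
    using separated_add_vertex[OF assms(1,2) _ assms(4)] assms(3) by (simp add: good_def)
  moreover have "seed k (k + 2) \<subseteq> add_vertex k t E C"
    using assms(3) subset_add_vertex[of E k t C] by (auto simp: good_def)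
  ultimately show ?thesis by (simp add: good_def)
qed

lemma good_add_vertex_rev:
  assumes "k \<ge> 1" "k + 2 \<le> t" "\<Union>E \<subseteq> {..<k + t}" "C \<in> cliques k t E"
    and good: "good k (Suc t) (add_vertex k t E C)"
  shows "good k t E"
proof -
  have "separated k t E"
    using separated_add_vertex_rev[OF assms(1) _ assms(3,4)] assms(2) good by (simp add: good_def)
  moreover have "seed k (k + 2) \<subseteq> E"
  proof
    fix e assume e: "e \<in> seed k (k + 2)"
    hence "k + t \<notin> e" using Union_seed[OF assms(1), of "k + 2"] assms(2) by fastforce
    moreover have "e \<in> add_vertex k t E C" using e good unfolding good_def by blast
    ultimately show "e \<in> E" by (auto simp: add_vertex_def)
  qed
  ultimately show ?thesis by (simp add: good_def)
qed

lemma not_good_add_mixed: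
  "k \<ge> 1 \<Longrightarrow> k \<le> t \<Longrightarrow> C \<in> mixed_cliques k \<Longrightarrow> \<not> good k (Suc t) (add_vertex k t E C)"
  using not_separated_add_mixed by (simp add: good_def)

lemma good_seed:
  assumes k: "k \<ge> 1"
  shows "good k (k + 2) (seed k (k + 2))"
    and "v < 2 * k \<Longrightarrow> clique_count k (k + 2) (seed k (k + 2)) v = k"
proof -
  have seed1: "seed k (Suc k) = add_vertex k k (seed k k) (left_clique k)"
    and seed2: "seed k (Suc (Suc k)) = add_vertex k (Suc k) (seed k (Suc k)) (right_clique k)"
    by (simp_all add: seed_choice_def)
  have L: "left_clique k \<in> cliques k k (seed k k)"
    and R: "right_clique k \<in> cliques k (Suc k) (seed k (Suc k))"
    by (rule left_clique_in_cliques[OF k], simp) (rule right_clique_in_cliques[OF k], simp)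
  have LR: "left_clique k \<notin> mixed_cliques k" "right_clique k \<notin> mixed_cliques k"
    by (simp_all add: mixed_cliques_def)
  have U0: "\<Union>(seed k k) \<subseteq> {..<k + k}" and U1: "\<Union>(seed k (Suc k)) \<subseteq> {..<k + Suc k}"
    by (rule Union_seed[OF k], simp)+
  have "separated k (Suc k) (seed k (Suc k))"
    unfolding seed1 using separated_add_vertex[OF order_refl U0 separated_seed[OF k]] L LR by simp
  hence "separated k (Suc (Suc k)) (seed k (Suc (Suc k)))"
    unfolding seed2 using separated_add_vertex[OF _ U1] R LR by simp
  thus "good k (k + 2) (seed k (k + 2))" by (simp add: good_def add_2_eq_Suc')
  assume v: "v < 2 * k"
  have "clique_count k (k + 2) (seed k (k + 2)) v =
      clique_count k (Suc (Suc k)) (add_vertex k (Suc k) (seed k (Suc k)) (right_clique k)) v"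
    by (simp only: seed2 add_2_eq_Suc')
  also have "\<dots> = clique_count k (Suc k) (seed k (Suc k)) v + (k - 1) * of_bool (v \<in> right_clique k)"
    by (rule clique_count_add_vertex[OF U1 R _ v]) simp
  also have "clique_count k (Suc k) (seed k (Suc k)) v =
      clique_count k k (seed k k) v + (k - 1) * of_bool (v \<in> left_clique k)"
    unfolding seed1 by (rule clique_count_add_vertex[OF U0 L order_refl v])
  finally have count: "clique_count k (k + 2) (seed k (k + 2)) v =
      1 + (k - 1) * of_bool (v \<in> left_clique k) + (k - 1) * of_bool (v \<in> right_clique k)"
    by (simp only: clique_count_seed[OF k v])
  have "v \<in> left_clique k \<union> right_clique k" "v \<notin> left_clique k \<inter> right_clique k"
    using v left_Un_right_clique[of k] left_Int_right_clique[of k] by simp_all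
  hence "of_bool (v \<in> left_clique k) + of_bool (v \<in> right_clique k) = (1 :: nat)"
    by auto
  hence "(k - 1) * of_bool (v \<in> left_clique k) + (k - 1) * of_bool (v \<in> right_clique k) = k - 1"
    by (metis distrib_left mult_1_right)
  thus "clique_count k (k + 2) (seed k (k + 2)) v = k"
    unfolding count using k by linarith
qed

lemma mixed_cliques_subset_separated:
  assumes "separated k t E" "k \<le> t"
  shows "mixed_cliques k \<subseteq> cliques k t E"
proof -
  have "cliques k k (seed k k) \<subseteq> cliques k t E"
    using assms by (intro cliques_mono) (simp_all add: separated_def)
  thus ?thesis using mixed_cliques_subset by blast
qed

lemma clique_count_good:
  assumes "k \<ge> 1" "k + 2 \<le> t" "good k t E" "v < 2 * k"
  shows "k \<le> clique_count k t E v"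
proof -
  have "cliques k (k + 2) (seed k (k + 2)) \<subseteq> cliques k t E"
    using assms(2,3) by (intro cliques_mono) (auto simp: good_def)
  hence "clique_count k (k + 2) (seed k (k + 2)) v \<le> clique_count k t E v"
    unfolding clique_count_def by (intro card_mono) (auto simp: finite_kcliques)
  thus ?thesis using good_seed(2)[OF assms(1,4)] by simp
qed

lemma not_graph_connectedI:
  assumes "a \<in> A" "a \<in> V" "b \<in> V" "b \<notin> A"
    and closed: "\<And>x y. x \<in> A \<Longrightarrow> y \<in> V \<Longrightarrow> {x, y} \<in> F \<Longrightarrow> y \<in> A"
  shows "\<not> graph_connected V F"
proof
  assume "graph_connected V F"
  hence "(\<lambda>x y. x \<in> V \<and> y \<in> V \<and> {x, y} \<in> F)\<^sup>*\<^sup>* a b"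
    using assms(2,3) by (simp add: graph_connected_def)
  hence "b \<in> A"
    by (induction rule: rtranclp_induct) (use assms(1) closed in blast)+
  thus False using assms(4) by blast
qed

lemma le_if_mult_less_mult_plus_one: "(a :: nat) * s < a * d + 1 \<Longrightarrow> 0 < a \<Longrightarrow> s \<le> d"
proof (rule ccontr)
  assume "a * s < a * d + 1" "0 < a" "\<not> s \<le> d"
  hence "a * (d + 1) \<le> a * s" by (intro mult_le_mono2) simp
  thus False using \<open>a * s < a * d + 1\<close> \<open>0 < a\<close> by simp
qed

lemma separating_partition_disconnects:
  assumes k: "k \<ge> 1" "k \<le> t" and sp: "separating_partition k t E A B"
  shows "\<not> graph_connected {..<k + t} (E - {{u, v} | u v. u \<in> left_clique k \<and> v \<in> right_clique k})"
proof -
  define S where "S = {{u, v} | u v. u \<in> left_clique k \<and> v \<in> right_clique k}"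
  have AB: "left_clique k \<subseteq> A" "right_clique k \<subseteq> B"
    and cp: "compatible_partition {..<k + t} (side_sets k t E) A B"
    using sp by (simp_all add: separating_partition_def)
  have closed: "y \<in> A" if "x \<in> A" "y \<in> {..<k + t}" "{x, y} \<in> E - S" for x y
  proof (rule ccontr)
    assume "y \<notin> A"
    hence "y \<in> B" "x \<notin> B" using that(1,2) cp by (auto simp: compatible_partition_def)
    show False
    proof (cases "{x, y} \<in> seed k k")
      case True
      hence "x < 2 * k" "y < 2 * k" using seed_edge_lessThan[of k "{x, y}"] k by auto
      hence "x \<in> left_clique k" "y \<in> right_clique k"
        using \<open>x \<notin> B\<close> \<open>y \<notin> A\<close> AB left_Un_right_clique[of k] by auto
      thus False using that(3) by (auto simp: S_def)
    next
      case False
      hence "{x, y} \<in> side_sets k t E" using that(3) by (simp add: side_sets_def)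
      thus False using cp \<open>y \<notin> A\<close> \<open>x \<notin> B\<close> by (auto simp: compatible_partition_def)
    qed
  qed
  have "0 \<in> left_clique k" "k \<in> right_clique k"
    using k by (simp_all add: left_clique_def right_clique_def)
  hence "0 \<in> A" "k \<notin> A" "k < k + t"
    using AB cp k by (auto simp: compatible_partition_def)
  thus ?thesis
    using closed unfolding S_def[symmetric] by (intro not_graph_connectedI[of 0 A _ k]) auto
qed

lemma separated_has_barrier:
  assumes k: "k \<ge> 2" "k \<le> t" and sep: "separated k t E"
    and count: "\<forall>v<2 * k. (k - 1) * s < clique_count k t E v"
  shows "has_barrier k s {..<k + t} E"
proof -
  obtain A B where "separating_partition k t E A B"
    using sep by (auto simp: separated_def)
  hence disconnected: "\<not> graph_connected {..<k + t}
      (E - {{u, v} | u v. u \<in> left_clique k \<and> v \<in> right_clique k})"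
    using k by (intro separating_partition_disconnects) auto
  have "seed k k \<subseteq> E" using sep by (simp add: separated_def)
  hence "cliques k k (seed k k) \<subseteq> cliques k t E" by (rule cliques_mono[OF _ \<open>k \<le> t\<close>])
  hence "left_clique k \<in> cliques k t E" "right_clique k \<in> cliques k t E"
    using left_clique_in_cliques[of k k] right_clique_in_cliques[of k k] k by auto
  hence cliques: "is_clique k {..<k + t} E (left_clique k)" "is_clique k {..<k + t} E (right_clique k)"
    by (simp_all add: kcliques_def)
  have degree: "s \<le> degree {..<k + t} E u" if "u \<in> left_clique k \<union> right_clique k" for u
  proof (rule le_if_mult_less_mult_plus_one)
    have "u < 2 * k" using that left_Un_right_clique[of k] by auto
    thus "(k - 1) * s < (k - 1) * degree {..<k + t} E u + 1"
      using count sep by (fastforce simp: separated_def)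
  qed (use k in simp)
  show ?thesis
    using cliques degree disconnected left_Int_right_clique[of k]
    unfolding has_barrier_def is_barrier_def by blast
qed

section \<open>Expectations along the process\<close>

definition ktree_expect :: "nat \<Rightarrow> nat \<Rightarrow> (nat set set \<Rightarrow> real) \<Rightarrow> real" where
  "ktree_expect k t f = (\<Sum>E\<in>set_pmf (ktree k t). pmf (ktree k t) E * f E)"

lemma prob_ktree_eq_expect:
  assumes "k \<ge> 1"
  shows "measure_pmf.prob (ktree k t) S = ktree_expect k t (\<lambda>E. of_bool (E \<in> S))"
proof -
  have "measure_pmf.prob (ktree k t) S = measure_pmf.prob (ktree k t) (S \<inter> set_pmf (ktree k t))"
    by (simp add: measure_Int_set_pmf)
  also have "\<dots> = sum (pmf (ktree k t)) (set_pmf (ktree k t) \<inter> S)"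
    using finite_set_pmf_ktree[OF assms] by (subst measure_measure_pmf_finite) (auto simp: Int_commute)
  also have "\<dots> = ktree_expect k t (\<lambda>E. of_bool (E \<in> S))"
    unfolding ktree_expect_def using finite_set_pmf_ktree[OF assms]
    by (auto simp: sum.inter_restrict intro: sum.cong)
  finally show ?thesis .
qed

lemma expectation_ktree_eq_expect:
  "k \<ge> 1 \<Longrightarrow> measure_pmf.expectation (ktree k t) f = ktree_expect k t f"
  unfolding ktree_expect_def
  by (subst integral_measure_pmf_real[OF finite_set_pmf_ktree]) (auto simp: mult.commute)

lemma ktree_expect_Suc:
  assumes "k \<ge> 1"
  shows "ktree_expect k (Suc t) h =
    ktree_expect k t (\<lambda>E. (\<Sum>C\<in>cliques k t E. h (add_vertex k t E C)) / real (card (cliques k t E)))"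
proof -
  have "ktree_expect k (Suc t) h = measure_pmf.expectation (ktree k (Suc t)) h"
    by (rule expectation_ktree_eq_expect[OF assms, symmetric])
  also have "\<dots> = (\<Sum>E\<in>set_pmf (ktree k t). pmf (ktree k t) E *\<^sub>R
      measure_pmf.expectation (map_pmf (add_vertex k t E) (pmf_of_set (cliques k t E))) h)"
    unfolding ktree_Suc_add_vertex
    by (rule pmf_expectation_bind)
      (auto simp: finite_set_pmf_ktree[OF assms] finite_kcliques cliques_nonempty[OF assms])
  also have "\<dots> = ktree_expect k t
      (\<lambda>E. (\<Sum>C\<in>cliques k t E. h (add_vertex k t E C)) / real (card (cliques k t E)))"
    unfolding ktree_expect_def
    by (intro sum.cong refl)
      (simp add: integral_pmf_of_set[OF cliques_nonempty[OF assms] finite_kcliques])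
  finally show ?thesis .
qed

lemma ktree_expect_mono:
  "(\<And>E. E \<in> set_pmf (ktree k t) \<Longrightarrow> f E \<le> g E) \<Longrightarrow> ktree_expect k t f \<le> ktree_expect k t g"
  unfolding ktree_expect_def by (intro sum_mono mult_left_mono) auto

lemma ktree_expect_cong:
  "(\<And>E. E \<in> set_pmf (ktree k t) \<Longrightarrow> f E = g E) \<Longrightarrow> ktree_expect k t f = ktree_expect k t g"
  unfolding ktree_expect_def by (intro sum.cong) auto

lemma ktree_expect_cmult: "ktree_expect k t (\<lambda>E. a * f E) = a * ktree_expect k t f"
  unfolding ktree_expect_def by (simp add: sum_distrib_left algebra_simps)

lemma ktree_expect_diff: "ktree_expect k t (\<lambda>E. f E - g E) = ktree_expect k t f - ktree_expect k t g"
  unfolding ktree_expect_def by (simp add: sum_subtractf algebra_simps)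

lemma ktree_expect_sum:
  "ktree_expect k t (\<lambda>E. \<Sum>v\<in>V. f v E) = (\<Sum>v\<in>V. ktree_expect k t (f v))"
  unfolding ktree_expect_def by (simp add: sum_distrib_left sum.swap[of _ V])

lemma sum_if_eq_card:
  assumes "finite A"
  shows "(\<Sum>x\<in>A. if P x then a else b) =
    real (card {x\<in>A. P x}) * a + (real (card A) - real (card {x\<in>A. P x})) * (b :: real)"
proof -
  have "card A = card {x\<in>A. P x} + card {x\<in>A. \<not> P x}"
    using assms by (subst card_Un_disjoint[symmetric]) (auto intro: arg_cong[where f = card])
  thus ?thesis using assms by (simp add: sum.If_cases Int_def)
qed

definition potential :: "nat \<Rightarrow> nat \<Rightarrow> nat \<Rightarrow> nat set set \<Rightarrow> real" where
  "potential k t v E =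
     (if good k t E then real (k - 1) / (real (clique_count k t E v) - real (k - 1)) else 0)"

definition avoid_ratio :: "nat \<Rightarrow> nat \<Rightarrow> real" where
  "avoid_ratio k t = (real (1 + k * t) - real (k * k - 1)) / real (1 + k * t)"

definition decay_ratio :: "nat \<Rightarrow> nat \<Rightarrow> real" where
  "decay_ratio k t = (real (1 + k * t) - real (k * k - 1) - real (k - 1)) / real (1 + k * t)"

lemma card_unmixed_cliques:
  assumes "k \<ge> 1" "k \<le> t" "separated k t E" "E \<in> set_pmf (ktree k t)"
  shows "real (card (cliques k t E - mixed_cliques k)) = real (1 + k * t) - real (k * k - 1)"
proof -
  have sub: "mixed_cliques k \<subseteq> cliques k t E"
    by (rule mixed_cliques_subset_separated[OF assms(3,2)])
  hence "card (mixed_cliques k) \<le> card (cliques k t E)"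
    by (intro card_mono) (simp_all add: finite_kcliques)
  thus ?thesis
    using sub ktree_support[OF assms(1,4)] card_mixed_cliques[OF assms(1)]
    by (simp add: card_Diff_subset finite_subset[OF sub] finite_kcliques of_nat_diff)
qed

lemma expect_good_Suc:
  assumes "k \<ge> 1" "k \<le> t"
  shows "avoid_ratio k t * ktree_expect k t (\<lambda>E. of_bool (good k t E))
    \<le> ktree_expect k (Suc t) (\<lambda>E. of_bool (good k (Suc t) E))"
proof -
  have "avoid_ratio k t * of_bool (good k t E) \<le>
      (\<Sum>C\<in>cliques k t E. of_bool (good k (Suc t) (add_vertex k t E C))) / real (card (cliques k t E))"
    if E: "E \<in> set_pmf (ktree k t)" for E
  proof (cases "good k t E")
    case True
    have U: "\<Union>E \<subseteq> {..<k + t}" and card: "card (cliques k t E) = 1 + k * t"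
      using ktree_support[OF assms(1) E] by simp_all
    have "real (1 + k * t) - real (k * k - 1) =
        (\<Sum>C\<in>cliques k t E - mixed_cliques k. of_bool (good k (Suc t) (add_vertex k t E C)))"
      using card_unmixed_cliques[OF assms _ E] good_add_vertex[OF assms(2) U True] True
      by (simp add: good_def)
    also have "\<dots> \<le> (\<Sum>C\<in>cliques k t E. of_bool (good k (Suc t) (add_vertex k t E C)))"
      by (rule sum_mono2) (simp_all add: finite_kcliques)
    finally show ?thesis
      using True card by (simp add: avoid_ratio_def divide_right_mono)
  qed (simp add: sum_nonneg)
  hence "ktree_expect k t (\<lambda>E. avoid_ratio k t * of_bool (good k t E)) \<le>
      ktree_expect k (Suc t) (\<lambda>E. of_bool (good k (Suc t) E))"
    unfolding ktree_expect_Suc[OF assms(1)] by (rule ktree_expect_mono)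
  thus ?thesis by (simp only: ktree_expect_cmult)
qed

lemma sum_potential_add_vertex:
  assumes k: "k \<ge> 1" "k + 2 \<le> t" and E: "E \<in> set_pmf (ktree k t)" and good: "good k t E"
    and v: "v < 2 * k"
  shows "(\<Sum>C\<in>cliques k t E. potential k (Suc t) v (add_vertex k t E C)) =
    (real (1 + k * t) - real (k * k - 1) - real (k - 1)) * potential k t v E"
proof -
  have kt: "k \<le> t" using k by simp
  have U: "\<Union>E \<subseteq> {..<k + t}" using ktree_support[OF k(1) E] by simp
  have sep: "separated k t E" using good by (simp add: good_def)
  define j where "j = real (k - 1)"
  define c where "c = real (clique_count k t E v)"
  have "k \<le> clique_count k t E v" by (rule clique_count_good[OF k good v])
  hence cj: "c - j \<ge> 1" "c > 0" using k by (simp_all add: c_def j_def of_nat_diff)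
  have mixed: "(\<Sum>C\<in>mixed_cliques k. potential k (Suc t) v (add_vertex k t E C)) = 0"
    using not_good_add_mixed[OF k(1) kt] by (simp add: potential_def)
  have unmixed: "potential k (Suc t) v (add_vertex k t E C) = (if v \<in> C then j / c else j / (c - j))"
    if C: "C \<in> cliques k t E - mixed_cliques k" for C
    using good_add_vertex[OF kt U good C] clique_count_add_vertex[OF U _ kt v] C
    by (simp add: potential_def c_def j_def)
  have "(\<Sum>C\<in>cliques k t E. potential k (Suc t) v (add_vertex k t E C)) =
      (\<Sum>C\<in>cliques k t E - mixed_cliques k. potential k (Suc t) v (add_vertex k t E C))"
    using sum.subset_diff[OF mixed_cliques_subset_separated[OF sep kt] finite_kcliques,
        where g = "\<lambda>C. potential k (Suc t) v (add_vertex k t E C)"] mixed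
    by simp
  also have "\<dots> = (\<Sum>C\<in>cliques k t E - mixed_cliques k. if v \<in> C then j / c else j / (c - j))"
    using unmixed by (rule sum.cong[OF refl])
  also have "\<dots> = c * (j / c) + (real (1 + k * t) - real (k * k - 1) - c) * (j / (c - j))"
    using card_unmixed_cliques[OF k(1) kt sep E]
    by (simp add: sum_if_eq_card finite_kcliques c_def clique_count_def)
  also have "\<dots> = (real (1 + k * t) - real (k * k - 1) - j) * (j / (c - j))"
    using cj by (simp add: field_simps)
  also have "j / (c - j) = potential k t v E"
    using good by (simp add: potential_def c_def j_def)
  finally show ?thesis by (simp add: j_def)
qed

lemma expect_potential_Suc:
  assumes k: "k \<ge> 1" "k + 2 \<le> t" and v: "v < 2 * k"
  shows "ktree_expect k (Suc t) (potential k (Suc t) v) = decay_ratio k t * ktree_expect k t (potential k t v)"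
proof -
  have "(\<Sum>C\<in>cliques k t E. potential k (Suc t) v (add_vertex k t E C)) / real (card (cliques k t E))
      = decay_ratio k t * potential k t v E" if E: "E \<in> set_pmf (ktree k t)" for E
  proof (cases "good k t E")
    case True
    thus ?thesis
      using sum_potential_add_vertex[OF k E True v] ktree_support[OF k(1) E]
      by (simp add: decay_ratio_def)
  next
    case False
    have U: "\<Union>E \<subseteq> {..<k + t}" using ktree_support[OF k(1) E] by simp
    have "\<not> good k (Suc t) (add_vertex k t E C)" if "C \<in> cliques k t E" for C
      using good_add_vertex_rev[OF k U that] False by blast
    thus ?thesis using False by (simp add: potential_def)
  qed
  hence "ktree_expect k (Suc t) (potential k (Suc t) v) = ktree_expect k t (\<lambda>E. decay_ratio k t * potential k t v E)"
    unfolding ktree_expect_Suc[OF k(1)] by (rule ktree_expect_cong)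
  thus ?thesis by (simp only: ktree_expect_cmult)
qed

lemma avoid_ratio_pos:
  assumes "k \<ge> 1" "k \<le> s"
  shows "avoid_ratio k s > 0"
proof -
  have "real k * real k \<le> real k * real s" using assms by (intro mult_left_mono) auto
  thus ?thesis using assms by (simp add: avoid_ratio_def of_nat_diff add_pos_nonneg)
qed

lemma decay_ratio_nonneg:
  assumes "k \<ge> 1" "k + 1 \<le> s"
  shows "decay_ratio k s \<ge> 0"
proof -
  have "real k * (real k + 1) \<le> real k * real s" using assms by (intro mult_left_mono) auto
  thus ?thesis using assms by (simp add: decay_ratio_def of_nat_diff algebra_simps add_pos_nonneg)
qed

lemma potential_nonneg:
  assumes "k \<ge> 1" "k + 2 \<le> t" "v < 2 * k"
  shows "0 \<le> potential k t v E"
proof (cases "good k t E")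
  case True
  hence "k \<le> clique_count k t E v" by (rule clique_count_good[OF assms(1,2) _ assms(3)])
  thus ?thesis using True assms(1) by (simp add: potential_def of_nat_diff)
qed (simp add: potential_def)

lemma good_le_has_barrier_plus_potential:
  assumes "k \<ge> 2" "k + 2 \<le> n"
  shows "of_bool (good k n E) \<le>
    of_bool (has_barrier k s {..<k + n} E) + (\<Sum>v<2 * k. real s * potential k n v E)"
proof -
  have k: "k \<ge> 1" using assms by simp
  have nonneg: "0 \<le> real s * potential k n v E" if "v < 2 * k" for v
    using potential_nonneg[OF k assms(2) that] by simp
  hence sum_nonneg: "0 \<le> (\<Sum>v<2 * k. real s * potential k n v E)"
    by (intro sum_nonneg) simp
  have "1 \<le> of_bool (has_barrier k s {..<k + n} E) + (\<Sum>v<2 * k. real s * potential k n v E)"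
    if good: "good k n E"
  proof (cases "\<forall>v<2 * k. (k - 1) * s < clique_count k n E v")
    case True
    hence "has_barrier k s {..<k + n} E"
      using good assms by (intro separated_has_barrier) (auto simp: good_def)
    thus ?thesis using sum_nonneg by simp
  next
    case False
    then obtain v where v: "v < 2 * k" and count: "clique_count k n E v \<le> (k - 1) * s"
      by (auto simp: not_less)
    define j where "j = real (k - 1)"
    define d where "d = real (clique_count k n E v) - j"
    have "k \<le> clique_count k n E v" by (rule clique_count_good[OF k assms(2) good v])
    hence "1 \<le> d" using k by (simp add: d_def j_def of_nat_diff)
    moreover have "real (clique_count k n E v) \<le> j * real s"
      using of_nat_mono[OF count] by (simp add: j_def)
    hence "d \<le> j * real s" by (simp add: d_def j_def)
    moreover have "potential k n v E = j / d"
      using good by (simp add: potential_def d_def j_def)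
    ultimately have "1 \<le> real s * potential k n v E"
      by (simp add: le_divide_eq mult.commute)
    also have "\<dots> \<le> (\<Sum>v<2 * k. real s * potential k n v E)"
      using v nonneg by (intro member_le_sum) auto
    finally show ?thesis by simp
  qed
  thus ?thesis using sum_nonneg by (cases "good k n E") simp_all
qed

lemma expect_good_ge_prod:
  assumes "k \<ge> 1" "k + 2 \<le> n"
  shows "(\<Prod>s\<in>{k + 2..<n}. avoid_ratio k s) * ktree_expect k (k + 2) (\<lambda>E. of_bool (good k (k + 2) E))
    \<le> ktree_expect k n (\<lambda>E. of_bool (good k n E))"
  using assms(2)
proof (induction n rule: dec_induct)
  case (step n)
  have "(\<Prod>s\<in>{k + 2..<Suc n}. avoid_ratio k s) * ktree_expect k (k + 2) (\<lambda>E. of_bool (good k (k + 2) E))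
      = avoid_ratio k n * ((\<Prod>s\<in>{k + 2..<n}. avoid_ratio k s) *
          ktree_expect k (k + 2) (\<lambda>E. of_bool (good k (k + 2) E)))"
    using step.hyps(1) by (simp add: prod.atLeastLessThan_Suc)
  also have "\<dots> \<le> avoid_ratio k n * ktree_expect k n (\<lambda>E. of_bool (good k n E))"
    using step.IH avoid_ratio_pos[OF assms(1), of n] step.hyps(1) by (intro mult_left_mono) auto
  also have "\<dots> \<le> ktree_expect k (Suc n) (\<lambda>E. of_bool (good k (Suc n) E))"
    using step.hyps(1) by (intro expect_good_Suc[OF assms(1)]) simp
  finally show ?case .
qed simp

lemma expect_potential_eq_prod:
  assumes "k \<ge> 1" "k + 2 \<le> n" "v < 2 * k"
  shows "ktree_expect k n (potential k n v) =
    (\<Prod>s\<in>{k + 2..<n}. decay_ratio k s) * ktree_expect k (k + 2) (potential k (k + 2) v)"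
  using assms(2)
proof (induction n rule: dec_induct)
  case (step n)
  thus ?case using expect_potential_Suc[OF assms(1) step.hyps(1) assms(3)]
    by (simp add: prod.atLeastLessThan_Suc)
qed simp

lemma expect_potential_seed_le:
  assumes "k \<ge> 1" "v < 2 * k"
  shows "ktree_expect k (k + 2) (potential k (k + 2) v)
    \<le> real (k - 1) * ktree_expect k (k + 2) (\<lambda>E. of_bool (good k (k + 2) E))"
proof -
  have "potential k (k + 2) v E \<le> real (k - 1) * of_bool (good k (k + 2) E)" for E
  proof (cases "good k (k + 2) E")
    case True
    hence "k \<le> clique_count k (k + 2) E v" by (rule clique_count_good[OF assms(1) order_refl _ assms(2)])
    hence "1 \<le> real (clique_count k (k + 2) E v) - real (k - 1)" using assms(1) by (simp add: of_nat_diff)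
    hence "real (k - 1) / (real (clique_count k (k + 2) E v) - real (k - 1)) \<le> real (k - 1) / 1"
      by (intro divide_left_mono) auto
    thus ?thesis using True by (simp add: potential_def)
  qed (simp add: potential_def)
  thus ?thesis by (simp add: ktree_expect_mono flip: ktree_expect_cmult)
qed

lemma expect_good_seed_pos:
  assumes "k \<ge> 1"
  shows "0 < ktree_expect k (k + 2) (\<lambda>E. of_bool (good k (k + 2) E))"
proof -
  let ?E = "seed k (k + 2)"
  have E: "?E \<in> set_pmf (ktree k (k + 2))" by (rule seed_in_support[OF assms order_refl])
  have "0 < pmf (ktree k (k + 2)) ?E * of_bool (good k (k + 2) ?E)"
    using E good_seed(1)[OF assms] by (simp add: pmf_positive)
  also have "\<dots> \<le> ktree_expect k (k + 2) (\<lambda>E. of_bool (good k (k + 2) E))"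
    unfolding ktree_expect_def
    by (rule member_le_sum[OF E _ finite_set_pmf_ktree[OF assms]]) simp
  finally show ?thesis .
qed

section \<open>Product estimates and the main theorem\<close>

lemma prod_ge_powr:
  fixes f :: "nat \<Rightarrow> real" and p b :: real
  assumes f: "\<And>s. a \<le> s \<Longrightarrow> 0 < f s \<and> - p / (real s + b) \<le> ln (f s)"
    and p: "0 \<le> p" and ab: "1 < real a + b" and n: "a \<le> n"
  shows "((real a - 1 + b) / (real n - 1 + b)) powr p \<le> (\<Prod>s\<in>{a..<n}. f s)"
  using n
proof (induction n rule: dec_induct)
  case base
  thus ?case using ab by simp
next
  case (step n)
  define y where "y = real n + b"
  have y: "1 < y" using step.hyps(1) ab by (simp add: y_def)
  have fn: "0 < f n" "- p / y \<le> ln (f n)" using f[OF step.hyps(1)] by (simp_all add: y_def)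
  have "ln (y - 1) - ln y \<le> - 1 / y"
    using ln_diff_le[of "y - 1" y] y by simp
  hence "p * (ln (y - 1) - ln y) \<le> p * (- 1 / y)" by (rule mult_left_mono[OF _ p])
  hence "exp (p * (ln (y - 1) - ln y)) \<le> exp (ln (f n))" using fn(2) by simp
  moreover have "((y - 1) / y) powr p = exp (p * (ln (y - 1) - ln y))"
    using y by (simp add: powr_def ln_div)
  ultimately have step_factor: "((y - 1) / y) powr p \<le> f n" using fn(1) by simp
  have "(real a - 1 + b) / (y - 1) * ((y - 1) / y) = (real a - 1 + b) / y"
    using y by (simp add: field_simps)
  hence "((real a - 1 + b) / (real (Suc n) - 1 + b)) powr p =
      ((real a - 1 + b) / (real n - 1 + b)) powr p * ((y - 1) / y) powr p"
    using y ab step.hyps(1) by (simp add: y_def powr_mult[symmetric] algebra_simps)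
  also have "\<dots> \<le> (\<Prod>s\<in>{a..<n}. f s) * f n"
    using step.IH step_factor f by (intro mult_mono prod_nonneg) (auto intro: less_imp_le)
  also have "\<dots> = (\<Prod>s\<in>{a..<Suc n}. f s)"
    using step.hyps(1) by (simp add: prod.atLeastLessThan_Suc)
  finally show ?case .
qed

lemma prod_le_powr:
  fixes g :: "nat \<Rightarrow> real" and c b :: real
  assumes g: "\<And>s. a \<le> s \<Longrightarrow> 0 \<le> g s \<and> g s \<le> 1 - c / (real s + b)"
    and c: "0 \<le> c" and ab: "0 < real a + b" and n: "a \<le> n"
  shows "(\<Prod>s\<in>{a..<n}. g s) \<le> ((real a + b) / (real n + b)) powr c"
  using n
proof (induction n rule: dec_induct)
  case base
  thus ?case using ab by simp
next
  case (step n)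
  define y where "y = real n + b"
  have y: "0 < y" using step.hyps(1) ab by (simp add: y_def)
  have gn: "0 \<le> g n" "g n \<le> 1 - c / y" using g[OF step.hyps(1)] by (simp_all add: y_def)
  have "- 1 / y \<le> ln y - ln (y + 1)"
    using ln_diff_le[of "y + 1" y] y by simp
  hence "c * (- 1 / y) \<le> c * (ln y - ln (y + 1))" by (rule mult_left_mono[OF _ c])
  moreover have "(y / (y + 1)) powr c = exp (c * (ln y - ln (y + 1)))"
    using y by (simp add: powr_def ln_div)
  ultimately have "exp (- c / y) \<le> (y / (y + 1)) powr c" by simp
  hence step_factor: "g n \<le> (y / (y + 1)) powr c"
    using gn exp_ge_add_one_self[of "- c / y"] by linarith
  have "(\<Prod>s\<in>{a..<Suc n}. g s) = (\<Prod>s\<in>{a..<n}. g s) * g n"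
    using step.hyps(1) by (simp add: prod.atLeastLessThan_Suc)
  also have "\<dots> \<le> ((real a + b) / y) powr c * (y / (y + 1)) powr c"
    using step.IH step_factor gn by (intro mult_mono) (simp_all add: y_def)
  also have "\<dots> = ((real a + b) / y * (y / (y + 1))) powr c"
    by (rule powr_mult[symmetric])
  also have "(real a + b) / y * (y / (y + 1)) = (real a + b) / (real (Suc n) + b)"
    using y by (simp add: y_def add.assoc)
  finally show ?case .
qed

lemma powr_divide_eq_mult_powr_minus: "(x / y) powr p = x powr p * y powr (- p)" for x y p :: real
  by (simp add: powr_divide powr_minus_divide)

lemma avoid_ratio_eq:
  "k \<ge> 1 \<Longrightarrow> avoid_ratio k s = (real k * real s + 2 - real k * real k) / (1 + real k * real s)"
  by (simp add: avoid_ratio_def of_nat_diff algebra_simps)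

lemma ln_avoid_ratio_ge:
  assumes "k \<ge> 1" "k \<le> s"
  shows "- ((real k * real k - 1) / real k) / (real s + (2 - real k * real k) / real k)
    \<le> ln (avoid_ratio k s)"
proof -
  define D where "D = real k * real s + 2 - real k * real k"
  define T where "T = 1 + real k * real s"
  have "real k * real k \<le> real k * real s" using assms by (intro mult_left_mono) auto
  hence D: "0 < D" by (simp add: D_def)
  have T: "0 < T" by (simp add: T_def add_pos_nonneg)
  have ratio: "avoid_ratio k s = D / T" using assms(1) by (simp add: avoid_ratio_eq D_def T_def)
  have "ln (1 / avoid_ratio k s) \<le> 1 / avoid_ratio k s - 1"
    using D T by (intro ln_le_minus_one) (simp add: ratio)
  hence "1 - T / D \<le> ln (avoid_ratio k s)"
    using D T by (simp add: ratio ln_div)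
  moreover have "1 - T / D = - (real k * real k - 1) / D"
    using D by (simp add: D_def T_def field_simps)
  moreover have "real s + (2 - real k * real k) / real k = D / real k"
    using assms(1) by (simp add: D_def field_simps)
  ultimately show ?thesis using assms(1) by simp
qed

lemma decay_div_avoid_ratio_eq:
  assumes "k \<ge> 1" "k \<le> s"
  shows "decay_ratio k s / avoid_ratio k s =
    1 - ((real k - 1) / real k) / (real s + (2 - real k * real k) / real k)"
proof -
  define D where "D = real k * real s + 2 - real k * real k"
  define T where "T = 1 + real k * real s"
  have "real k * real k \<le> real k * real s" using assms by (intro mult_left_mono) auto
  hence D: "0 < D" by (simp add: D_def)
  have T: "0 < T" by (simp add: T_def add_pos_nonneg)
  have avoid: "avoid_ratio k s = D / T" using assms(1) by (simp add: avoid_ratio_eq D_def T_def)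
  have decay: "decay_ratio k s = (D - (real k - 1)) / T"
    using assms(1) by (simp add: decay_ratio_def D_def T_def of_nat_diff algebra_simps)
  have "decay_ratio k s / avoid_ratio k s = 1 - (real k - 1) / D"
    unfolding avoid decay using D T by (simp add: field_simps)
  moreover have "real s + (2 - real k * real k) / real k = D / real k"
    using assms(1) by (simp add: D_def field_simps)
  ultimately show ?thesis using assms(1) by simp
qed

lemma prod_avoid_ratio_ge:
  assumes k: "k \<ge> 2" and n: "k + 2 \<le> n"
  shows "(1 + 2 / real k) powr (real k - 1 / real k) * real n powr (1 / real k - real k)
    \<le> (\<Prod>s\<in>{k + 2..<n}. avoid_ratio k s)"
proof -
  define p where "p = (real k * real k - 1) / real k"
  define b where "b = (2 - real k * real k) / real k"
  have "2 \<le> real k" using k by simp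
  hence "2 * 2 \<le> real k * real k" by (intro mult_mono) auto
  hence p: "p = real k - 1 / real k" "0 \<le> p" and b: "real (k + 2) - 1 + b = 1 + 2 / real k" "b < 1"
    using k by (simp_all add: p_def b_def field_simps)
  have f: "0 < avoid_ratio k s \<and> - p / (real s + b) \<le> ln (avoid_ratio k s)" if "k + 2 \<le> s" for s
    using that k avoid_ratio_pos[of k s] ln_avoid_ratio_ge[of k s] by (simp add: p_def b_def)
  have "0 < 2 / real k" using k by simp
  hence ab: "1 < real (k + 2) + b" using b(1) by linarith
  have "((1 + 2 / real k) / (real n - 1 + b)) powr p \<le> (\<Prod>s\<in>{k + 2..<n}. avoid_ratio k s)"
    using prod_ge_powr[OF f p(2) ab n] by (simp only: b(1))
  moreover have "0 < real n - 1 + b" using n ab by simp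
  hence "((1 + 2 / real k) / real n) powr p \<le> ((1 + 2 / real k) / (real n - 1 + b)) powr p"
    using b(2) p(2) k by (intro powr_mono2 divide_left_mono) (simp_all add: add_pos_nonneg)
  moreover have "((1 + 2 / real k) / real n) powr p =
      (1 + 2 / real k) powr (real k - 1 / real k) * real n powr (1 / real k - real k)"
    unfolding p(1) powr_divide_eq_mult_powr_minus by simp
  ultimately show ?thesis by simp
qed

lemma prod_decay_div_avoid_ratio_le:
  assumes k: "k \<ge> 2" and n: "2 * k \<le> n"
  shows "(\<Prod>s\<in>{k + 2..<n}. decay_ratio k s / avoid_ratio k s)
    \<le> (4 + 4 / real k) powr (1 - 1 / real k) * real n powr (1 / real k - 1)"
proof -
  define c where "c = (real k - 1) / real k"
  define b where "b = (2 - real k * real k) / real k"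
  have c: "c = 1 - 1 / real k" "0 \<le> c" using k by (simp_all add: c_def field_simps)
  have "real k * (2 * real k) \<le> real k * real n" using n by (intro mult_left_mono) auto
  hence "real k * (real k * 2) \<le> 4 + real k * real n" by (simp add: algebra_simps)
  hence b: "real (k + 2) + b = 2 + 2 / real k" "real n / 2 \<le> real n + b"
    using k by (simp_all add: b_def field_simps)
  have g: "0 \<le> decay_ratio k s / avoid_ratio k s \<and> decay_ratio k s / avoid_ratio k s \<le> 1 - c / (real s + b)"
    if "k + 2 \<le> s" for s
  proof -
    have "decay_ratio k s / avoid_ratio k s = 1 - c / (real s + b)"
      using that k decay_div_avoid_ratio_eq[of k s] by (simp add: c_def b_def)
    moreover have "0 \<le> decay_ratio k s / avoid_ratio k s"
      using that k decay_ratio_nonneg[of k s] avoid_ratio_pos[of k s] by simp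
    ultimately show ?thesis by simp
  qed
  have "0 < 2 / real k" using k by simp
  hence ab: "0 < real (k + 2) + b" using b(1) by linarith
  have "(\<Prod>s\<in>{k + 2..<n}. decay_ratio k s / avoid_ratio k s) \<le> ((2 + 2 / real k) / (real n + b)) powr c"
    using prod_le_powr[OF g c(2) ab] n k by (simp only: b(1))
  also have "\<dots> \<le> ((2 + 2 / real k) / (real n / 2)) powr c"
    using b(2) c(2) n k by (intro powr_mono2 divide_left_mono) (simp_all add: add_pos_nonneg)
  also have "(2 + 2 / real k) / (real n / 2) = (4 + 4 / real k) / real n"
    by (simp add: field_simps)
  also have "((4 + 4 / real k) / real n) powr c =
      (4 + 4 / real k) powr (1 - 1 / real k) * real n powr (1 / real k - 1)"
    unfolding c(1) powr_divide_eq_mult_powr_minus by simp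
  finally show ?thesis .
qed

lemma prob_has_barrier_ge_products:
  assumes k: "k \<ge> 2" and n: "k + 2 \<le> n"
  defines "a0 \<equiv> ktree_expect k (k + 2) (\<lambda>E. of_bool (good k (k + 2) E))"
    and "R \<equiv> \<Prod>s\<in>{k + 2..<n}. avoid_ratio k s"
    and "Q \<equiv> \<Prod>s\<in>{k + 2..<n}. decay_ratio k s / avoid_ratio k s"
  shows "R * a0 * (1 - 2 * real k * real (k - 1) * real s * Q)
    \<le> measure_pmf.prob (ktree k n) {E. has_barrier k s {..<k + n} E}"
proof -
  have k1: "k \<ge> 1" using k by simp
  have "avoid_ratio k s \<noteq> 0" if "s \<in> {k + 2..<n}" for s
    using avoid_ratio_pos[OF k1, of s] that by simp
  hence "(\<Prod>s\<in>{k + 2..<n}. decay_ratio k s) = R * Q"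
    unfolding R_def Q_def prod.distrib[symmetric] by (intro prod.cong refl) simp
  moreover have "0 \<le> R * Q"
    unfolding R_def Q_def prod.distrib[symmetric] using avoid_ratio_pos[OF k1] decay_ratio_nonneg[OF k1]
    by (intro prod_nonneg) (auto intro: divide_nonneg_pos)
  ultimately have potential: "ktree_expect k n (potential k n v) \<le> R * Q * (real (k - 1) * a0)"
    if "v < 2 * k" for v
    using expect_potential_eq_prod[OF k1 n that] expect_potential_seed_le[OF k1 that]
    by (simp add: a0_def mult_left_mono)
  have "R * a0 - (\<Sum>v<2 * k. real s * (R * Q * (real (k - 1) * a0))) \<le>
      ktree_expect k n (\<lambda>E. of_bool (good k n E)) - (\<Sum>v<2 * k. real s * ktree_expect k n (potential k n v))"
    using expect_good_ge_prod[OF k1 n] potential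
    by (intro diff_mono sum_mono mult_left_mono) (simp_all add: R_def a0_def)
  also have "\<dots> = ktree_expect k n (\<lambda>E. of_bool (good k n E) - (\<Sum>v<2 * k. real s * potential k n v E))"
    by (simp add: ktree_expect_diff ktree_expect_sum ktree_expect_cmult)
  also have "\<dots> \<le> ktree_expect k n (\<lambda>E. of_bool (E \<in> {E. has_barrier k s {..<k + n} E}))"
    using good_le_has_barrier_plus_potential[OF k n] by (intro ktree_expect_mono) (simp add: algebra_simps)
  also have "\<dots> = measure_pmf.prob (ktree k n) {E. has_barrier k s {..<k + n} E}"
    by (rule prob_ktree_eq_expect[OF k1, symmetric])
  finally show ?thesis using k1 by (simp add: algebra_simps of_nat_diff)
qed

lemma prob_has_barrier_ge_half:
  assumes k: "k \<ge> 2" and n: "k + 2 \<le> n"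
    and small: "2 * real k * real (k - 1) * real s *
      (\<Prod>s\<in>{k + 2..<n}. decay_ratio k s / avoid_ratio k s) \<le> 1 / 2"
  shows "(\<Prod>s\<in>{k + 2..<n}. avoid_ratio k s) *
      ktree_expect k (k + 2) (\<lambda>E. of_bool (good k (k + 2) E)) / 2
    \<le> measure_pmf.prob (ktree k n) {E. has_barrier k s {..<k + n} E}"
proof -
  have k1: "k \<ge> 1" using k by simp
  have "0 \<le> (\<Prod>s\<in>{k + 2..<n}. avoid_ratio k s)"
    using avoid_ratio_pos[OF k1] by (intro prod_nonneg) (auto intro: less_imp_le)
  moreover have "0 < ktree_expect k (k + 2) (\<lambda>E. of_bool (good k (k + 2) E))"
    by (rule expect_good_seed_pos[OF k1])
  ultimately have "(\<Prod>s\<in>{k + 2..<n}. avoid_ratio k s) *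
      ktree_expect k (k + 2) (\<lambda>E. of_bool (good k (k + 2) E)) * (1 / 2)
    \<le> (\<Prod>s\<in>{k + 2..<n}. avoid_ratio k s) *
      ktree_expect k (k + 2) (\<lambda>E. of_bool (good k (k + 2) E)) *
      (1 - 2 * real k * real (k - 1) * real s *
        (\<Prod>s\<in>{k + 2..<n}. decay_ratio k s / avoid_ratio k s))"
    using small by (intro mult_left_mono) auto
  also have "\<dots> \<le> measure_pmf.prob (ktree k n) {E. has_barrier k s {..<k + n} E}"
    by (rule prob_has_barrier_ge_products[OF k n])
  finally show ?thesis by simp
qed

lemma prob_has_barrier_power_bound:
  assumes k: "k \<ge> 2"
  obtains a \<beta> :: real where "0 < a" "0 < \<beta>"
    "\<And>n s. 2 * k \<le> n \<Longrightarrow> real s \<le> \<beta> * real n powr (1 - 1 / real k) \<Longrightarrow>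
       a * real n powr (1 / real k - real k)
       \<le> measure_pmf.prob (ktree k n) {E. has_barrier k s {..<k + n} E}"
proof -
  have k1: "k \<ge> 1" using k by simp
  define a0 where "a0 = ktree_expect k (k + 2) (\<lambda>E. of_bool (good k (k + 2) E))"
  define Cr where "Cr = (1 + 2 / real k) powr (real k - 1 / real k)"
  define Cq where "Cq = (4 + 4 / real k) powr (1 - 1 / real k)"
  have a0: "0 < a0" unfolding a0_def by (rule expect_good_seed_pos[OF k1])
  have "0 < 1 + 2 / real k" "0 < 4 + 4 / real k" by (simp_all add: add_pos_nonneg)
  hence Cr: "0 < Cr" and Cq: "0 < Cq" unfolding Cr_def Cq_def by simp_all
  define \<beta> where "\<beta> = 1 / (4 * real k * real (k - 1) * Cq)"
  show ?thesis
  proof (rule that[of "Cr * a0 / 2" \<beta>])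
    show "0 < Cr * a0 / 2" using Cr a0 by simp
    show "0 < \<beta>" unfolding \<beta>_def using Cq k by (intro divide_pos_pos mult_pos_pos) simp_all
    fix n s assume n: "2 * k \<le> n" and s: "real s \<le> \<beta> * real n powr (1 - 1 / real k)"
    have n2: "k + 2 \<le> n" using n k by simp
    let ?Q = "\<Prod>s\<in>{k + 2..<n}. decay_ratio k s / avoid_ratio k s"
    have "0 \<le> ?Q"
      using decay_ratio_nonneg[OF k1] avoid_ratio_pos[OF k1]
      by (intro prod_nonneg divide_nonneg_pos) auto
    hence "2 * real k * real (k - 1) * real s * ?Q \<le>
        2 * real k * real (k - 1) * (\<beta> * real n powr (1 - 1 / real k)) * (Cq * real n powr (1 / real k - 1))"
      using s prod_decay_div_avoid_ratio_le[OF k n] Cq k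
      by (intro mult_mono mult_left_mono) (simp_all add: Cq_def \<beta>_def)
    also have "\<dots> = 1 / 2"
      using k Cq n by (simp add: \<beta>_def powr_add[symmetric] field_simps)
    finally have half: "(\<Prod>s\<in>{k + 2..<n}. avoid_ratio k s) * a0 / 2
        \<le> measure_pmf.prob (ktree k n) {E. has_barrier k s {..<k + n} E}"
      unfolding a0_def by (rule prob_has_barrier_ge_half[OF k n2])
    have "Cr * a0 / 2 * real n powr (1 / real k - real k) = Cr * real n powr (1 / real k - real k) * (a0 / 2)"
      by simp
    also have "\<dots> \<le> (\<Prod>s\<in>{k + 2..<n}. avoid_ratio k s) * (a0 / 2)"
      using prod_avoid_ratio_ge[OF k n2] a0 unfolding Cr_def by (intro mult_right_mono) auto
    also have "\<dots> \<le> measure_pmf.prob (ktree k n) {E. has_barrier k s {..<k + n} E}"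
      using half by simp
    finally show "Cr * a0 / 2 * real n powr (1 / real k - real k)
        \<le> measure_pmf.prob (ktree k n) {E. has_barrier k s {..<k + n} E}" .
  qed
qed

lemma nat_between_mult_powr:
  fixes c e x :: real
  assumes "0 < c" "0 < e" "(1 / c) powr (1 / e) \<le> x"
  obtains s :: nat where "c * x powr e \<le> real s" "real s \<le> 2 * c * x powr e"
proof -
  have "1 / c = ((1 / c) powr (1 / e)) powr e" using assms by (simp add: powr_powr)
  also have "\<dots> \<le> x powr e" using assms by (intro powr_mono2) auto
  finally have "1 \<le> c * x powr e" using assms(1) by (simp add: field_simps)
  hence "c * x powr e \<le> real (nat \<lceil>c * x powr e\<rceil>)" "real (nat \<lceil>c * x powr e\<rceil>) \<le> 2 * c * x powr e"
    by linarith+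
  thus thesis by (rule that)
qed

theorem lemma8:
  fixes k :: nat
  assumes "k \<ge> 2"
  shows "\<exists>c c' :: real. c > 0 \<and> c' > 0 \<and> (\<exists>N. \<forall>n \<ge> N.
           measure_pmf.prob (ktree k n)
             {E. \<exists>s::nat. real s \<ge> c * real n powr (1 - 1 / real k) \<and>
                    has_barrier k s (ktree_vertices k n) E}
           \<ge> c' * real n powr (1 / real k - real k))"
proof -
  obtain a \<beta> where a: "0 < a" and \<beta>: "0 < \<beta>" and bound:
    "\<And>n s. 2 * k \<le> n \<Longrightarrow> real s \<le> \<beta> * real n powr (1 - 1 / real k) \<Longrightarrow>
       a * real n powr (1 / real k - real k)
       \<le> measure_pmf.prob (ktree k n) {E. has_barrier k s {..<k + n} E}"
    using prob_has_barrier_power_bound[OF assms] by blast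
  define e where "e = 1 - 1 / real k"
  have e: "0 < e" using assms by (simp add: e_def)
  define N where "N = nat \<lceil>(2 / \<beta>) powr (1 / e)\<rceil> + 2 * k"
  have "a * real n powr (1 / real k - real k) \<le> measure_pmf.prob (ktree k n)
      {E. \<exists>s::nat. real s \<ge> \<beta> / 2 * real n powr e \<and> has_barrier k s (ktree_vertices k n) E}"
    if n: "N \<le> n" for n
  proof -
    have large: "(1 / (\<beta> / 2)) powr (1 / e) \<le> real n" using n by (simp add: N_def) linarith
    obtain s :: nat
      where s: "\<beta> / 2 * real n powr e \<le> real s" "real s \<le> 2 * (\<beta> / 2) * real n powr e"
      by (rule nat_between_mult_powr[OF half_gt_zero[OF \<beta>] e large])
    have "a * real n powr (1 / real k - real k) \<le> measure_pmf.prob (ktree k n) {E. has_barrier k s {..<k + n} E}"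
      using n s(2) by (intro bound) (simp_all add: N_def e_def)
    also have "\<dots> \<le> measure_pmf.prob (ktree k n)
        {E. \<exists>s::nat. real s \<ge> \<beta> / 2 * real n powr e \<and> has_barrier k s (ktree_vertices k n) E}"
      using s(1) by (intro measure_pmf.finite_measure_mono) (auto simp: ktree_vertices_def)
    finally show ?thesis .
  qed
  thus ?thesis using a \<beta> unfolding e_def by (intro exI[of _ "\<beta> / 2"] exI[of _ a] conjI exI[of _ N]) auto
qed

end
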